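(* Let $\Omega\subseteq\mathbb{R}^2$ be a bounded, simply connected domain of class $C^2$, $a_1,\ldots,a_p$ distinct points in $\Omega$, and $\{L_1,\ldots,L_q\}$ a minimal connection for $\{a_1,\ldots,a_p\}$ relative to $\Omega$. For any set $A\subseteq\Omega$ of finite perimeter, $\partial^*A$ has only finitely many essential arcs.
   Context: Connections: a connection for $\{a_1,\ldots,a_p\}$ relative to $\Omega$ is a finite family of closed non-degenerate segments $L_j\subseteq\overline\Omega$, each joining two of the $a_i$ or some $a_i$ to a point of $\partial\Omega$, with each $a_i$ an endpoint of an odd number of $L_j$; a minimal one minimises total length. $\partial^*A$ is the essential boundary. Arcs: for $A\subseteq\Omega$ of finite perimeter, fix a decomposition $\partial^*A=\bigcup_{i\geq0}C_i\mod\mathcal{H}^1$ into countably many rectifiable Jordan curves with $P(A,\mathbb{R}^2)=\sum_i\mathcal{H}^1(C_i)$ (such a decomposition exists by Ambrosio–Caselles–Masnou–Morel), and Lipschitz parametrisations $\gamma_i\colon[0,1]\to\overline\Omega$ of $C_i$, injective on $[0,1)$, with $\gamma_i(0)=\gamma_i(1)$. Write $\gamma_i^{-1}(\Omega\setminus\bigcup_jL_j)$ as a countable disjoint union of relatively open intervals $I_{ik}$ of $[0,1]$ (where an interval containing $0$ and $1$ is treated as a single interval of the form $[0,a)\cup(b,1]$, or all of $[0,1]$). The arcs of $\partial^*A$ are the sets $\Gamma_{ik}:=\gamma_i(\overline{I_{ik}})$. An arc is essential if it is not a closed curve and either its endpoints lie on two distinct segments $L_j\neq L_k$, or one endpoint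 lies on $\partial\Omega$ and the other lies on a segment $L_j$ that does not touch $\partial\Omega$. *)

theory Defs
  imports "HOL-Analysis.Analysis"
begin

type_synonym pt = "real^2"

definition C2_real :: "(real \<Rightarrow> real) \<Rightarrow> bool" where
  "C2_real f \<longleftrightarrow> (\<exists>f' f''. (\<forall>t. (f has_real_derivative f' t) (at t)) \<and>
                         (\<forall>t. (f' has_real_derivative f'' t) (at t)) \<and> continuous_on UNIV f'')"

definition C2_boundary :: "pt set \<Rightarrow> bool" where
  "C2_boundary \<Omega> \<longleftrightarrow> (\<forall>x0\<in>frontier \<Omega>. \<exists>R f r h.
      orthogonal_transformation R \<and> C2_real f \<and> f 0 = 0 \<and> r > 0 \<and> h > 0 \<and>
      (\<forall>y::pt. \<bar>y$1\<bar> < r \<and> \<bar>y$2\<bar> < h \<longrightarrow> (x0 + R y \<in> \<Omega> \<longleftrightarrow> y$2 > f (y$1))))"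

definition C2_domain :: "pt set \<Rightarrow> bool" where
  "C2_domain \<Omega> \<longleftrightarrow> open \<Omega> \<and> connected \<Omega> \<and> \<Omega> \<noteq> {} \<and> C2_boundary \<Omega>"

text \<open>A connection is a finite family of segments L j = closed_segment (P j) (Q j), j < q.\<close>
definition connection ::
  "pt set \<Rightarrow> (nat \<Rightarrow> pt) \<Rightarrow> nat \<Rightarrow> nat \<Rightarrow> (nat \<Rightarrow> pt) \<Rightarrow> (nat \<Rightarrow> pt) \<Rightarrow> bool" where
  "connection \<Omega> a p q P Q \<longleftrightarrow>
     (\<forall>j<q. P j \<noteq> Q j \<and> closed_segment (P j) (Q j) \<subseteq> closure \<Omega> \<and>
        ((\<exists>i<p. \<exists>i'<p. {P j, Q j} = {a i, a i'}) \<or>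
         (\<exists>i<p. \<exists>b\<in>frontier \<Omega>. {P j, Q j} = {a i, b}))) \<and>
     (\<forall>i<p. odd (card {j. j < q \<and> a i \<in> {P j, Q j}}))"

definition conn_length :: "nat \<Rightarrow> (nat \<Rightarrow> pt) \<Rightarrow> (nat \<Rightarrow> pt) \<Rightarrow> real" where
  "conn_length q P Q = (\<Sum>j<q. dist (P j) (Q j))"

definition minimal_connection ::
  "pt set \<Rightarrow> (nat \<Rightarrow> pt) \<Rightarrow> nat \<Rightarrow> nat \<Rightarrow> (nat \<Rightarrow> pt) \<Rightarrow> (nat \<Rightarrow> pt) \<Rightarrow> bool" where
  "minimal_connection \<Omega> a p q P Q \<longleftrightarrow> connection \<Omega> a p q P Q \<and>
     (\<forall>q' P' Q'. connection \<Omega> a p q' P' Q' \<longrightarrow> conn_length q P Q \<le> conn_length q' P' Q')"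

definition hausdorff1 :: "pt set \<Rightarrow> ennreal" where
  "hausdorff1 S = (SUP \<delta>\<in>{0<..}.
      INF C\<in>{C :: nat \<Rightarrow> pt set. S \<subseteq> (\<Union>n. C n) \<and> (\<forall>n. bounded (C n) \<and> diameter (C n) \<le> \<delta>)}.
        (\<Sum>n. ennreal (diameter (C n))))"

definition test_field :: "(pt \<Rightarrow> pt) \<Rightarrow> (pt \<Rightarrow> pt \<Rightarrow> pt) \<Rightarrow> bool" where
  "test_field \<phi> \<phi>' \<longleftrightarrow> (\<forall>x. (\<phi> has_derivative \<phi>' x) (at x)) \<and>
     (\<forall>i j. continuous_on UNIV (\<lambda>x. \<phi>' x (axis i 1) $ j)) \<and>
     compact (closure {x. \<phi> x \<noteq> 0}) \<and> (\<forall>x. norm (\<phi> x) \<le> 1)"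

definition divergence :: "(pt \<Rightarrow> pt \<Rightarrow> pt) \<Rightarrow> pt \<Rightarrow> real" where
  "divergence \<phi>' x = (\<Sum>i\<in>UNIV. \<phi>' x (axis i 1) $ i)"

definition perimeter :: "pt set \<Rightarrow> ennreal" where
  "perimeter A = (SUP (\<phi>, \<phi>')\<in>{(\<phi>, \<phi>'). test_field \<phi> \<phi>'}.
       ennreal (integral A (divergence \<phi>')))"

definition finite_perimeter :: "pt set \<Rightarrow> bool" where
  "finite_perimeter A \<longleftrightarrow> A \<in> sets lebesgue \<and> perimeter A < \<infinity>"

definition density_ratio :: "pt set \<Rightarrow> pt \<Rightarrow> real \<Rightarrow> real" where
  "density_ratio A x r = measure lebesgue (A \<inter> ball x r) / measure lebesgue (ball x r)"

definition essential_boundary :: "pt set \<Rightarrow> pt set" where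
  "essential_boundary A = {x. \<not> ((density_ratio A x \<longlongrightarrow> 0) (at_right 0)) \<and>
                              \<not> ((density_ratio A x \<longlongrightarrow> 1) (at_right 0))}"

definition jordan_decomposition ::
  "pt set \<Rightarrow> pt set \<Rightarrow> nat set \<Rightarrow> (nat \<Rightarrow> pt set) \<Rightarrow> (nat \<Rightarrow> real \<Rightarrow> pt) \<Rightarrow> bool" where
  "jordan_decomposition \<Omega> A I C \<gamma> \<longleftrightarrow>
     (\<forall>i\<in>I. C i = \<gamma> i ` {0..1} \<and> \<gamma> i ` {0..1} \<subseteq> closure \<Omega> \<and>
            (\<exists>B. B-lipschitz_on {0..1} (\<gamma> i)) \<and>
            inj_on (\<gamma> i) {0..<1} \<and> \<gamma> i 0 = \<gamma> i 1) \<and>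
     hausdorff1 ((essential_boundary A - (\<Union>i\<in>I. C i)) \<union> ((\<Union>i\<in>I. C i) - essential_boundary A)) = 0 \<and>
     perimeter A = (\<Sum>i. if i \<in> I then hausdorff1 (C i) else 0)"

definition seg_union :: "nat \<Rightarrow> (nat \<Rightarrow> pt) \<Rightarrow> (nat \<Rightarrow> pt) \<Rightarrow> pt set" where
  "seg_union q P Q = (\<Union>j<q. closed_segment (P j) (Q j))"

definition arc_params :: "pt set \<Rightarrow> nat \<Rightarrow> (nat \<Rightarrow> pt) \<Rightarrow> (nat \<Rightarrow> pt) \<Rightarrow> (real \<Rightarrow> pt) \<Rightarrow> real set" where
  "arc_params \<Omega> q P Q g = {t\<in>{0..1}. g t \<in> \<Omega> - seg_union q P Q}"

text \<open>The interval I_ik containing parameter t: a connected component of the parameter set,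
  where the components containing 0 and 1 are merged (wrap-around).\<close>
definition arc_interval :: "real set \<Rightarrow> real \<Rightarrow> real set" where
  "arc_interval U t =
     (if 0 \<in> connected_component_set U t \<or> 1 \<in> connected_component_set U t
      then connected_component_set U 0 \<union> connected_component_set U 1
      else connected_component_set U t)"

text \<open>Endpoints of the arc gamma(closure J): the images of closure J - J
  (empty iff J = [0,1]; a single point iff the arc closes up).\<close>
definition arc_endpoints :: "(real \<Rightarrow> pt) \<Rightarrow> real set \<Rightarrow> pt set" where
  "arc_endpoints g J = g ` (closure J - J)"

definition essential_arc ::
  "pt set \<Rightarrow> nat \<Rightarrow> (nat \<Rightarrow> pt) \<Rightarrow> (nat \<Rightarrow> pt) \<Rightarrow> (real \<Rightarrow> pt) \<Rightarrow> real set \<Rightarrow> bool" where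
  "essential_arc \<Omega> q P Q g J \<longleftrightarrow> (\<exists>e1 e2. arc_endpoints g J = {e1, e2} \<and> e1 \<noteq> e2 \<and>
     ((\<exists>j<q. \<exists>k<q. closed_segment (P j) (Q j) \<noteq> closed_segment (P k) (Q k) \<and>
                   e1 \<in> closed_segment (P j) (Q j) \<and> e2 \<in> closed_segment (P k) (Q k)) \<or>
      (e1 \<in> frontier \<Omega> \<and> (\<exists>j<q. e2 \<in> closed_segment (P j) (Q j) \<and>
                                closed_segment (P j) (Q j) \<inter> frontier \<Omega> = {}))))"

definition essential_arcs ::
  "pt set \<Rightarrow> nat \<Rightarrow> (nat \<Rightarrow> pt) \<Rightarrow> (nat \<Rightarrow> pt) \<Rightarrow> nat set \<Rightarrow> (nat \<Rightarrow> real \<Rightarrow> pt) \<Rightarrow> (nat \<times> real set) set" where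
  "essential_arcs \<Omega> q P Q I \<gamma> =
     {(i, arc_interval (arc_params \<Omega> q P Q (\<gamma> i)) t) | i t.
        i \<in> I \<and> t \<in> arc_params \<Omega> q P Q (\<gamma> i) \<and>
        essential_arc \<Omega> q P Q (\<gamma> i) (arc_interval (arc_params \<Omega> q P Q (\<gamma> i)) t)}"

end

theory Submission
  imports Defs "HOL-Library.Multiset"
begin

text \<open>Exchanging two segments of a minimal connection for the two other pairings of their
  endpoints never shortens it. Consequently the segments are pairwise disjoint: a common point
  would have to be a shared endpoint c, and c lies between the far ends of any two segments
  ending there. At a site a i the odd degree provides three such segments, and c cannot lie on
  all three sides of a triangle; on the frontier c would violate the interior ball condition of
  a C^2 boundary. So distinct segments, and the frontier and the
  segments not touching it, are at least some \<delta> > 0 apart, and the two endpoints of every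
  essential arc are \<delta> apart. Each essential arc therefore contains a continuum joining two
  points at distance \<delta>/2; these continua are pairwise disjoint along a Jordan curve, and each
  contributes \<delta>/4 to its one-dimensional Hausdorff measure. As the lengths of the curves add
  up to the finite perimeter of A, there are only finitely many essential arcs.\<close>

section \<open>Points on segments\<close>

lemma segment_exits_through_frontier:
  fixes u c :: "'a::euclidean_space"
  assumes "open S" "u \<in> S" "c \<notin> S"
  obtains b where "b \<in> frontier S" "closed_segment u b \<subseteq> closure S" "dist u b \<le> dist u c"
proof -
  define F where "F = closed_segment u c - S"
  have "closed F" "c \<in> F"
    using assms by (auto simp: F_def closed_Diff)
  then obtain b where "b \<in> F" and nearest: "\<And>y. y \<in> F \<Longrightarrow> dist u b \<le> dist u y"
    using distance_attains_inf[of F u] by blast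
  then have b: "b \<in> closed_segment u c" "b \<notin> S" "u \<noteq> b"
    using assms(2) by (auto simp: F_def)
  have "open_segment u b \<subseteq> S"
  proof
    fix x assume x: "x \<in> open_segment u b"
    then have "dist u x < dist u b"
      by (metis dist_commute dist_in_open_segment)
    moreover have "x \<in> closed_segment u c"
      using x b(1) subset_closed_segment open_closed_segment by blast
    ultimately show "x \<in> S"
      using nearest by (force simp: F_def)
  qed
  then have "closed_segment u b \<subseteq> closure S"
    using closure_mono[of "open_segment u b" S] b(3) by simp
  moreover from this have "b \<in> frontier S"
    using b(2) assms(1) by (simp add: frontier_def interior_open subset_iff)
  ultimately show ?thesis
    using that nearest \<open>c \<in> F\<close> by blast
qed

lemma common_point_of_triangle_sides:
  fixes x P Q R :: "'a::real_vector"
  assumes "x \<in> closed_segment P Q" "x \<in> closed_segment P R" "x \<in> closed_segment Q R"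
  shows "x \<in> {P, Q, R}"
proof (rule ccontr)
  assume ne: "x \<notin> {P, Q, R}"
  obtain s where s: "0 \<le> s" "s \<le> 1" "x = (1 - s) *\<^sub>R P + s *\<^sub>R Q"
    using assms(1) by (auto simp: closed_segment_def)
  obtain t where t: "0 \<le> t" "t \<le> 1" "x = (1 - t) *\<^sub>R P + t *\<^sub>R R"
    using assms(2) by (auto simp: closed_segment_def)
  obtain r where r: "0 \<le> r" "r \<le> 1" "x = (1 - r) *\<^sub>R Q + r *\<^sub>R R"
    using assms(3) by (auto simp: closed_segment_def)
  have "s \<noteq> 0" "s \<noteq> 1" "t \<noteq> 0" "t \<noteq> 1"
    using s t ne by auto
  then have s': "1 < 1/s" and t': "1 < 1/t"
    using s t by simp_all
  define v where "v = x - P"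
  have "v \<noteq> 0" using ne by (auto simp: v_def)
  have "v = s *\<^sub>R (Q - P)" using s(3) by (simp add: v_def algebra_simps)
  then have Q: "Q = P + (1/s) *\<^sub>R v" using \<open>s \<noteq> 0\<close> by simp
  have "v = t *\<^sub>R (R - P)" using t(3) by (simp add: v_def algebra_simps)
  then have R: "R = P + (1/t) *\<^sub>R v" using \<open>t \<noteq> 0\<close> by simp
  \<comment> \<open>Q and R lie on the ray from P through x strictly beyond x, hence so does all of [Q,R].\<close>
  have "x = P + ((1 - r) * (1/s) + r * (1/t)) *\<^sub>R v"
    using r(3) unfolding Q R by (simp add: algebra_simps)
  moreover have "x = P + 1 *\<^sub>R v" by (simp add: v_def)
  ultimately have "((1 - r) * (1/s) + r * (1/t)) *\<^sub>R v = 1 *\<^sub>R v" by simp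
  then have "(1 - r) * (1/s) + r * (1/t) = 1"
    using \<open>v \<noteq> 0\<close> by (metis scaleR_cancel_right)
  moreover have "(1 - r) * 1 + r * 1 < (1 - r) * (1/s) + r * (1/t)"
  proof (cases "r = 0")
    case False
    then have "r * 1 < r * (1/t)" using r t' by (intro mult_strict_left_mono) auto
    moreover have "(1 - r) * 1 \<le> (1 - r) * (1/s)" using r s' by (intro mult_left_mono) auto
    ultimately show ?thesis by linarith
  qed (use s' in simp)
  ultimately show False by simp
qed

section \<open>Exchange arguments for minimal connections\<close>

definition admissible_segment :: "pt set \<Rightarrow> (nat \<Rightarrow> pt) \<Rightarrow> nat \<Rightarrow> pt \<times> pt \<Rightarrow> bool" where
  "admissible_segment \<Omega> a p s \<longleftrightarrow> fst s \<noteq> snd s \<and> closed_segment (fst s) (snd s) \<subseteq> closure \<Omega> \<and>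
     ((\<exists>i<p. \<exists>i'<p. {fst s, snd s} = {a i, a i'}) \<or> (\<exists>i<p. \<exists>b\<in>frontier \<Omega>. {fst s, snd s} = {a i, b}))"

definition endpoint_count :: "pt \<Rightarrow> (pt \<times> pt) list \<Rightarrow> nat" where
  "endpoint_count x N = length (filter (\<lambda>s. x \<in> {fst s, snd s}) N)"

definition total_length :: "(pt \<times> pt) list \<Rightarrow> real" where
  "total_length N = (\<Sum>s\<leftarrow>N. dist (fst s) (snd s))"

lemma endpoint_count_append [simp]:
  "endpoint_count x (M @ N) = endpoint_count x M + endpoint_count x N"
  by (simp add: endpoint_count_def)

lemma total_length_append [simp]: "total_length (M @ N) = total_length M + total_length N"
  by (simp add: total_length_def)

lemma connection_iff_admissible:
  "connection \<Omega> a p q P Q \<longleftrightarrow> (\<forall>j<q. admissible_segment \<Omega> a p (P j, Q j)) \<and>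
     (\<forall>i<p. odd (card {j. j < q \<and> a i \<in> {P j, Q j}}))"
  by (simp add: connection_def admissible_segment_def)

lemma connection_segment_endpoints:
  assumes "connection \<Omega> a p q P Q" "j < q"
  shows "P j \<noteq> Q j" "P j \<in> closure \<Omega>" "Q j \<in> closure \<Omega>"
    "P j \<in> frontier \<Omega> \<union> a ` {..<p}" "Q j \<in> frontier \<Omega> \<union> a ` {..<p}"
    "P j \<in> a ` {..<p} \<or> Q j \<in> a ` {..<p}"
proof -
  have "P j \<noteq> Q j \<and> closed_segment (P j) (Q j) \<subseteq> closure \<Omega> \<and>
        ((\<exists>i<p. \<exists>i'<p. {P j, Q j} = {a i, a i'}) \<or> (\<exists>i<p. \<exists>b\<in>frontier \<Omega>. {P j, Q j} = {a i, b}))"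
    using assms unfolding connection_def by blast
  then show "P j \<noteq> Q j" "P j \<in> closure \<Omega>" "Q j \<in> closure \<Omega>"
    "P j \<in> frontier \<Omega> \<union> a ` {..<p}" "Q j \<in> frontier \<Omega> \<union> a ` {..<p}"
    "P j \<in> a ` {..<p} \<or> Q j \<in> a ` {..<p}"
    by (auto simp: doubleton_eq_iff)
qed

lemma conn_length_segment_list:
  "conn_length (length L) (\<lambda>j. fst (L!j)) (\<lambda>j. snd (L!j)) = total_length L"
  by (simp add: conn_length_def total_length_def sum_list_sum_nth atLeast0LessThan)

lemma connection_segment_list:
  assumes "\<forall>s\<in>set L. admissible_segment \<Omega> a p s" "\<forall>i<p. odd (endpoint_count (a i) L)"
  shows "connection \<Omega> a p (length L) (\<lambda>j. fst (L!j)) (\<lambda>j. snd (L!j))"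
proof -
  have "card {j. j < length L \<and> x \<in> {fst (L!j), snd (L!j)}} = endpoint_count x L" for x
    by (simp add: endpoint_count_def length_filter_conv_card)
  then show ?thesis
    using assms by (simp add: connection_iff_admissible)
qed

text \<open>The segments outside K together with N form again a connection, since every a i keeps odd
  degree.\<close>
lemma minimal_connection_replace_segments:
  assumes mc: "minimal_connection \<Omega> a p q P Q" and K: "K \<subseteq> {..<q}"
    and N: "\<forall>s\<in>set N. admissible_segment \<Omega> a p s"
    and parity: "\<forall>i<p. even (endpoint_count (a i) N + card {j\<in>K. a i \<in> {P j, Q j}})"
  shows "(\<Sum>j\<in>K. dist (P j) (Q j)) \<le> total_length N"
proof -
  have conn: "connection \<Omega> a p q P Q" using mc by (simp add: minimal_connection_def)
  define xs where "xs = filter (\<lambda>j. j \<notin> K) [0..<q]"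
  define L where "L = map (\<lambda>j. (P j, Q j)) xs @ N"
  have set_xs: "set xs = {..<q} - K" and "distinct xs" by (auto simp: xs_def)
  have "\<forall>s\<in>set L. admissible_segment \<Omega> a p s"
    using N conn set_xs by (auto simp: L_def connection_iff_admissible)
  moreover have "odd (endpoint_count (a i) L)" if "i < p" for i
  proof -
    have "card {j. j < q \<and> a i \<in> {P j, Q j}} =
        card (({..<q} - K) \<inter> {j. a i \<in> {P j, Q j}}) + card {j\<in>K. a i \<in> {P j, Q j}}"
    proof -
      have "{j. j < q \<and> a i \<in> {P j, Q j}} =
          (({..<q} - K) \<inter> {j. a i \<in> {P j, Q j}}) \<union> {j\<in>K. a i \<in> {P j, Q j}}"
        using K by auto
      moreover have "finite {j\<in>K. a i \<in> {P j, Q j}}"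
        using K by (auto intro: finite_subset[of _ "{..<q}"])
      ultimately show ?thesis
        by (subst card_Un_disjoint[symmetric]) auto
    qed
    moreover have "endpoint_count (a i) L = card (({..<q} - K) \<inter> {j. a i \<in> {P j, Q j}}) + endpoint_count (a i) N"
      using \<open>distinct xs\<close>
      by (simp add: L_def endpoint_count_def filter_map o_def distinct_length_filter set_xs Int_commute)
    moreover have "odd (card {j. j < q \<and> a i \<in> {P j, Q j}})"
      using conn that by (simp add: connection_def)
    moreover have "even (endpoint_count (a i) N + card {j\<in>K. a i \<in> {P j, Q j}})"
      using parity that by blast
    ultimately show ?thesis
      by presburger
  qed
  then have "\<forall>i<p. odd (endpoint_count (a i) L)"
    by blast
  ultimately have "conn_length q P Q \<le> conn_length (length L) (\<lambda>j. fst (L!j)) (\<lambda>j. snd (L!j))"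
    using mc connection_segment_list[of L \<Omega> a p] unfolding minimal_connection_def by blast
  also have "\<dots> = total_length L"
    by (rule conn_length_segment_list)
  also have "total_length L = (\<Sum>j\<in>{..<q} - K. dist (P j) (Q j)) + total_length N"
    using \<open>distinct xs\<close>
    by (simp add: L_def total_length_def o_def sum_list_distinct_conv_sum_set set_xs)
  finally show ?thesis
    using K by (simp add: conn_length_def sum.subset_diff[of K "{..<q}"])
qed


text \<open>N can stand in for the segment [u, v] in a connection.\<close>
definition admissible_link :: "pt set \<Rightarrow> (nat \<Rightarrow> pt) \<Rightarrow> nat \<Rightarrow> (pt \<times> pt) list \<Rightarrow> pt \<Rightarrow> pt \<Rightarrow> bool" where
  "admissible_link \<Omega> a p N u v \<longleftrightarrow> (\<forall>s\<in>set N. admissible_segment \<Omega> a p s) \<and>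
     (\<forall>k<p. even (endpoint_count (a k) N + count {#u, v#} (a k)))"

lemma admissible_link_commute: "admissible_link \<Omega> a p N u v \<longleftrightarrow> admissible_link \<Omega> a p N v u"
  by (simp add: admissible_link_def add_mset_commute)

lemma admissible_link_Nil:
  assumes "u = v \<or> u \<notin> a ` {..<p} \<and> v \<notin> a ` {..<p}"
  shows "admissible_link \<Omega> a p [] u v"
  using assms by (auto simp: admissible_link_def endpoint_count_def)

lemma admissible_link_append:
  assumes M: "admissible_link \<Omega> a p M u w" and N: "admissible_link \<Omega> a p N v w"
    and w: "w \<notin> a ` {..<p}"
  shows "admissible_link \<Omega> a p (M @ N) u v"
  unfolding admissible_link_def
proof (intro conjI allI impI)
  show "\<forall>s\<in>set (M @ N). admissible_segment \<Omega> a p s"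
    using M N by (auto simp: admissible_link_def)
  fix k assume "k < p"
  then have "even (endpoint_count (a k) M + count {#u, w#} (a k))"
    "even (endpoint_count (a k) N + count {#v, w#} (a k))"
    using M N unfolding admissible_link_def by blast+
  moreover have "count {#u, v#} (a k) = count {#u, w#} (a k) + count {#v, w#} (a k)"
    using w \<open>k < p\<close> by auto
  ultimately show "even (endpoint_count (a k) (M @ N) + count {#u, v#} (a k))"
    by (simp only: endpoint_count_append even_add)
qed

lemma admissible_link_to_frontier:
  assumes "open \<Omega>" "a ` {..<p} \<subseteq> \<Omega>" "i < p" "c \<notin> \<Omega>"
  obtains N where "admissible_link \<Omega> a p N (a i) c" "total_length N \<le> dist (a i) c"
proof -
  obtain b where b: "b \<in> frontier \<Omega>" "closed_segment (a i) b \<subseteq> closure \<Omega>" "dist (a i) b \<le> dist (a i) c"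
    using segment_exits_through_frontier[OF assms(1) _ assms(4)] assms(2,3) by blast
  then have "b \<notin> \<Omega>"
    using assms(1) by (auto simp: frontier_def interior_open)
  then have outside: "a k \<noteq> b" "a k \<noteq> c" if "k < p" for k
    using that assms(2,4) by auto
  have "admissible_segment \<Omega> a p (a i, b)"
    using b outside[OF assms(3)] assms(3) by (auto simp: admissible_segment_def)
  moreover have "endpoint_count (a k) [(a i, b)] = count {#a i, c#} (a k)" if "k < p" for k
    using outside[OF that] by (simp add: endpoint_count_def)
  ultimately have "admissible_link \<Omega> a p [(a i, b)] (a i) c"
    by (simp add: admissible_link_def)
  then show thesis
    using that b(3) by (simp add: total_length_def)
qed

text \<open>Where the segment [a i, a i'] leaves the closure of \<Omega>, both ends can instead be run
  straight to the frontier, which costs no more.\<close>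
lemma admissible_chain_between_sites:
  assumes \<Omega>: "open \<Omega>" and a: "a ` {..<p} \<subseteq> \<Omega>" and i: "i < p" "i' < p"
  obtains N where "admissible_link \<Omega> a p N (a i) (a i')" "total_length N \<le> dist (a i) (a i')"
proof -
  consider "a i = a i'" | "a i \<noteq> a i'" "closed_segment (a i) (a i') \<subseteq> closure \<Omega>"
    | w where "w \<in> closed_segment (a i) (a i')" "w \<notin> closure \<Omega>"
    by blast
  then show thesis
  proof cases
    case 1
    then show thesis
      using that[of "[]"] admissible_link_Nil by (simp add: total_length_def)
  next
    case 2
    then have "admissible_link \<Omega> a p [(a i, a i')] (a i) (a i')"
      using i by (auto simp: admissible_link_def endpoint_count_def admissible_segment_def)
    then show thesis
      using that by (simp add: total_length_def)
  next
    case 3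
    then have "w \<notin> \<Omega>"
      using closure_subset by blast
    obtain M where "admissible_link \<Omega> a p M (a i) w" "total_length M \<le> dist (a i) w"
      using admissible_link_to_frontier[OF \<Omega> a i(1) \<open>w \<notin> \<Omega>\<close>] by blast
    moreover obtain N where "admissible_link \<Omega> a p N (a i') w" "total_length N \<le> dist (a i') w"
      using admissible_link_to_frontier[OF \<Omega> a i(2) \<open>w \<notin> \<Omega>\<close>] by blast
    moreover have "dist (a i) (a i') = dist (a i) w + dist w (a i')"
      using 3 by (simp add: between_mem_segment[symmetric] between)
    moreover have "w \<notin> a ` {..<p}"
      using \<open>w \<notin> \<Omega>\<close> a by blast
    ultimately show thesis
      using that[of "M @ N"] admissible_link_append by (simp add: dist_commute)
  qed
qed

lemma admissible_chain:
  assumes \<Omega>: "open \<Omega>" and a: "a ` {..<p} \<subseteq> \<Omega>"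
    and u: "u \<in> frontier \<Omega> \<union> a ` {..<p}" and v: "v \<in> frontier \<Omega> \<union> a ` {..<p}"
  obtains N where "admissible_link \<Omega> a p N u v" "total_length N \<le> dist u v"
proof -
  have site: "x \<in> a ` {..<p}" if "x \<in> frontier \<Omega> \<union> a ` {..<p}" "x \<in> \<Omega>" for x
    using that \<Omega> by (auto simp: frontier_def interior_open)
  consider "u \<notin> \<Omega>" "v \<notin> \<Omega>" | "u \<in> \<Omega>" "v \<notin> \<Omega>" | "u \<notin> \<Omega>" "v \<in> \<Omega>" | "u \<in> \<Omega>" "v \<in> \<Omega>"
    by blast
  then show thesis
  proof cases
    case 1
    then have "admissible_link \<Omega> a p [] u v"
      using a by (intro admissible_link_Nil) blast
    then show thesis
      using that by (simp add: total_length_def)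
  next
    case 2
    then obtain i where "i < p" "u = a i"
      using site[OF u] by blast
    then show thesis
      using that admissible_link_to_frontier[OF \<Omega> a \<open>i < p\<close> \<open>v \<notin> \<Omega>\<close>] by blast
  next
    case 3
    then obtain i where "i < p" "v = a i"
      using site[OF v] by blast
    then obtain N where "admissible_link \<Omega> a p N v u" "total_length N \<le> dist v u"
      using admissible_link_to_frontier[OF \<Omega> a \<open>i < p\<close> \<open>u \<notin> \<Omega>\<close>] by blast
    then show thesis
      using that by (simp add: admissible_link_commute dist_commute)
  next
    case 4
    then obtain i i' where "i < p" "u = a i" "i' < p" "v = a i'"
      using site u v by blast
    then show thesis
      using that admissible_chain_between_sites[OF \<Omega> a] by blast
  qed
qed

lemma minimal_connection_exchange_pair:
  assumes mc: "minimal_connection \<Omega> a p q P Q" and \<Omega>: "open \<Omega>" and a: "a ` {..<p} \<subseteq> \<Omega>"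
    and jk: "j < q" "k < q" "j \<noteq> k"
    and repair: "{#u1, v1#} + {#u2, v2#} = {#P j, Q j#} + {#P k, Q k#}"
  shows "dist (P j) (Q j) + dist (P k) (Q k) \<le> dist u1 v1 + dist u2 v2"
proof -
  have conn: "connection \<Omega> a p q P Q"
    using mc by (simp add: minimal_connection_def)
  note ends_j = connection_segment_endpoints[OF conn jk(1)]
    and ends_k = connection_segment_endpoints[OF conn jk(2)]
  have "{u1, v1, u2, v2} = {P j, Q j, P k, Q k}"
    using arg_cong[where f = set_mset, OF repair] by (simp add: insert_commute)
  moreover have "{P j, Q j, P k, Q k} \<subseteq> frontier \<Omega> \<union> a ` {..<p}"
    using ends_j(4,5) ends_k(4,5) by blast
  ultimately obtain N1 N2 where
      N1: "admissible_link \<Omega> a p N1 u1 v1" "total_length N1 \<le> dist u1 v1" and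
      N2: "admissible_link \<Omega> a p N2 u2 v2" "total_length N2 \<le> dist u2 v2"
    using admissible_chain[OF \<Omega> a, of u1 v1] admissible_chain[OF \<Omega> a, of u2 v2] by (metis insert_subset)
  have single: "card {m\<in>{l}. x \<in> {P m, Q m}} = count {#P l, Q l#} x" if "P l \<noteq> Q l" for l x
  proof -
    have "{m\<in>{l}. x \<in> {P m, Q m}} = (if x \<in> {P l, Q l} then {l} else {})"
      by auto
    then show ?thesis
      using that by auto
  qed
  have incident: "card {m\<in>{j, k}. x \<in> {P m, Q m}} = count {#u1, v1#} x + count {#u2, v2#} x" for x
  proof -
    have "{m\<in>{j, k}. x \<in> {P m, Q m}} = {m\<in>{j}. x \<in> {P m, Q m}} \<union> {m\<in>{k}. x \<in> {P m, Q m}}"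
      by blast
    then have "card {m\<in>{j, k}. x \<in> {P m, Q m}} =
        card {m\<in>{j}. x \<in> {P m, Q m}} + card {m\<in>{k}. x \<in> {P m, Q m}}"
      using jk(3) by (simp add: card_Un_disjoint disjoint_iff)
    also have "\<dots> = count ({#P j, Q j#} + {#P k, Q k#}) x"
      using single ends_j(1) ends_k(1) by simp
    finally show ?thesis
      by (simp only: repair[symmetric] count_union)
  qed
  have "even (endpoint_count (a i) (N1 @ N2) + card {m\<in>{j, k}. a i \<in> {P m, Q m}})" if "i < p" for i
    using N1(1) N2(1) that unfolding admissible_link_def
    by (simp only: incident endpoint_count_append even_add)
  moreover have "{j, k} \<subseteq> {..<q}" "\<forall>s\<in>set (N1 @ N2). admissible_segment \<Omega> a p s"
    using jk N1(1) N2(1) by (auto simp: admissible_link_def)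
  ultimately have "(\<Sum>m\<in>{j, k}. dist (P m) (Q m)) \<le> total_length (N1 @ N2)"
    using minimal_connection_replace_segments[OF mc] by blast
  then show ?thesis
    using N1(2) N2(2) jk(3) by simp
qed

text \<open>Otherwise the segment could be shortened by running from X straight to the frontier.\<close>
lemma minimal_connection_ball_subset:
  assumes mc: "minimal_connection \<Omega> a p q P Q" and \<Omega>: "open \<Omega>" and a: "a ` {..<p} \<subseteq> \<Omega>"
    and j: "j < q" and ends: "{P j, Q j} = {c, X}" and c: "c \<in> frontier \<Omega>"
  shows "ball X (dist X c) \<subseteq> \<Omega>"
proof
  fix y assume y: "y \<in> ball X (dist X c)"
  show "y \<in> \<Omega>"
  proof (rule ccontr)
    assume "y \<notin> \<Omega>"
    have conn: "connection \<Omega> a p q P Q"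
      using mc by (simp add: minimal_connection_def)
    have "c \<notin> \<Omega>"
      using c \<Omega> by (auto simp: frontier_def interior_open)
    then obtain i where "i < p" "X = a i"
      using connection_segment_endpoints(6)[OF conn j] ends a by (auto simp: doubleton_eq_iff)
    then obtain N where N: "admissible_link \<Omega> a p N X y" "total_length N \<le> dist X y"
      using admissible_link_to_frontier[OF \<Omega> a _ \<open>y \<notin> \<Omega>\<close>] by blast
    have "card {m\<in>{j}. a k \<in> {P m, Q m}} = count {#X, y#} (a k)" if "k < p" for k
    proof -
      have "a k \<noteq> c" "a k \<noteq> y"
        using that a \<open>c \<notin> \<Omega>\<close> \<open>y \<notin> \<Omega>\<close> by auto
      moreover from this have "{m\<in>{j}. a k \<in> {P m, Q m}} = (if a k = X then {j} else {})"
        using ends by auto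
      ultimately show ?thesis by simp
    qed
    then have "(\<Sum>m\<in>{j}. dist (P m) (Q m)) \<le> total_length N"
      using N(1) j by (intro minimal_connection_replace_segments[OF mc]) (auto simp: admissible_link_def)
    moreover have "dist (P j) (Q j) = dist X c"
      using ends by (auto simp: doubleton_eq_iff dist_commute)
    ultimately show False
      using N(2) y by simp
  qed
qed

section \<open>Boundaries of class C^2\<close>

lemma power2_dist_scaleR_unit:
  fixes y w :: "'a::real_inner"
  assumes "norm w = 1"
  shows "(dist y (s *\<^sub>R w))\<^sup>2 = (norm y)\<^sup>2 - 2 * s * inner y w + s\<^sup>2"
proof -
  have "inner w w = 1"
    using assms power2_norm_eq_inner[of w] by simp
  then show ?thesis
    unfolding dist_norm power2_norm_eq_inner
    by (simp add: inner_diff_left inner_diff_right inner_commute power2_eq_square algebra_simps)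
qed

lemma power2_norm_vec2: "(norm (y::real^2))\<^sup>2 = (y$1)\<^sup>2 + (y$2)\<^sup>2"
  unfolding power2_norm_eq_inner by (simp add: inner_vec_def sum_2 power2_eq_square)

lemma inner_vec2: "inner (y::real^2) w = y$1 * w$1 + y$2 * w$2"
  by (simp add: inner_vec_def sum_2)

lemma inner_bound_outside_tangent_balls:
  fixes y w :: "'a::real_inner"
  assumes w: "norm w = 1" and "m > 0"
    and outside: "\<And>s. s = m \<or> s = - m \<Longrightarrow> m \<le> dist y (s *\<^sub>R w)"
  shows "2 * m * \<bar>inner y w\<bar> \<le> (norm y)\<^sup>2"
proof -
  have far: "m\<^sup>2 \<le> (dist y (s *\<^sub>R w))\<^sup>2" if "s = m \<or> s = - m" for s
    using outside[OF that] \<open>m > 0\<close> by (simp add: power_mono)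
  have "m\<^sup>2 \<le> (norm y)\<^sup>2 - 2 * m * inner y w + m\<^sup>2"
    using far[of m] power2_dist_scaleR_unit[OF w, of y m] by simp
  moreover have "m\<^sup>2 \<le> (norm y)\<^sup>2 - 2 * (- m) * inner y w + (- m)\<^sup>2"
    using far[of "- m"] power2_dist_scaleR_unit[OF w, of y "- m"] by (simp only: simp_thms)
  ultimately show ?thesis
    by (simp add: abs_if)
qed

text \<open>The point (0, -\<tau>) lies below the graph, so it lies outside both balls only if their
  common axis is horizontal.\<close>
lemma tangent_balls_axis_horizontal:
  fixes w :: "real^2" and f :: "real \<Rightarrow> real"
  assumes m: "m > 0" and r: "r > 0" and h: "h > 0" and f0: "f 0 = 0"
    and H: "\<And>y::real^2. \<bar>y$1\<bar> < r \<Longrightarrow> \<bar>y$2\<bar> < h \<Longrightarrow> y$2 \<le> f (y$1) \<Longrightarrow>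
      2 * m * \<bar>inner y w\<bar> \<le> (norm y)\<^sup>2"
  shows "w$2 = 0"
proof (rule ccontr)
  assume "w$2 \<noteq> 0"
  define \<tau> where "\<tau> = min (h/2) (m * \<bar>w$2\<bar>)"
  have \<tau>: "0 < \<tau>" "\<tau> < h" "\<tau> < 2 * m * \<bar>w$2\<bar>"
    using h m \<open>w$2 \<noteq> 0\<close> by (auto simp: \<tau>_def min_def)
  have "2 * m * \<bar>inner (vector [0, -\<tau>]) w\<bar> \<le> (norm (vector [0, -\<tau>] :: real^2))\<^sup>2"
    using H[of "vector [0, -\<tau>]"] \<tau> r f0 by auto
  then have "2 * m * (\<tau> * \<bar>w$2\<bar>) \<le> \<tau>\<^sup>2"
    using \<tau>(1) by (simp add: power2_norm_vec2 inner_vec2 abs_mult)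
  then have "2 * m * \<bar>w$2\<bar> \<le> \<tau>"
    using \<tau>(1) by (simp add: power2_eq_square)
  then show False
    using \<tau> by simp
qed

lemma subgraph_meets_tangent_balls:
  fixes w :: "real^2" and f :: "real \<Rightarrow> real"
  assumes w: "norm w = 1" and m: "m > 0" and r: "r > 0" and h: "h > 0" and f0: "f 0 = 0"
    and f': "(f has_real_derivative d) (at 0)"
  shows "\<exists>y::real^2. \<bar>y$1\<bar> < r \<and> \<bar>y$2\<bar> < h \<and> y$2 \<le> f (y$1) \<and>
           y \<in> ball (m *\<^sub>R w) m \<union> ball ((- m) *\<^sub>R w) m"
proof (rule ccontr)
  assume "\<not> ?thesis"
  then have H: "2 * m * \<bar>inner y w\<bar> \<le> (norm y)\<^sup>2"
    if "\<bar>y$1\<bar> < r" "\<bar>y$2\<bar> < h" "y$2 \<le> f (y$1)" for y :: "real^2"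
    using that by (intro inner_bound_outside_tangent_balls[OF w m]) (auto simp: dist_commute)
  then have w2: "w$2 = 0"
    by (rule tangent_balls_axis_horizontal[where f = f, OF m r h f0])
  then have "(w$1)\<^sup>2 = 1"
    using w power2_norm_vec2[of w] by simp
  then have "\<bar>w$1\<bar> = 1"
    by (metis real_sqrt_abs real_sqrt_one)
  \<comment> \<open>Points (s, f s) with small s > 0 now enter the ball around m w, since f s = O(s).\<close>
  have "\<forall>\<^sub>F y in at 0. dist ((f y - f 0) / (y - 0)) d < 1"
    using f' by (simp add: has_field_derivative_iff tendsto_iff)
  moreover have "\<forall>\<^sub>F y in at 0. dist (f y) 0 < h"
    using DERIV_isCont[OF f'] f0 h by (simp add: isCont_def tendsto_iff)
  ultimately have "\<forall>\<^sub>F y in at 0. \<bar>f y / y - d\<bar> < 1 \<and> \<bar>f y\<bar> < h"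
    by eventually_elim (simp add: f0 dist_real_def)
  then obtain \<delta> where \<delta>: "\<delta> > 0"
    and near: "\<And>y. y \<noteq> 0 \<Longrightarrow> dist y 0 < \<delta> \<Longrightarrow> \<bar>f y / y - d\<bar> < 1 \<and> \<bar>f y\<bar> < h"
    unfolding eventually_at by blast
  define K where "K = 1 + (\<bar>d\<bar> + 1)\<^sup>2"
  have K: "K > 0" by (simp add: K_def add_pos_nonneg)
  define s where "s = min (\<delta>/2) (min (r/2) (m/K))"
  have s: "0 < s" "s < \<delta>" "s < r" "s \<le> m/K"
    using \<delta> r m K by (auto simp: s_def)
  then have "\<bar>f s / s - d\<bar> < 1" "\<bar>f s\<bar> < h"
    using near[of s] by (auto simp: dist_real_def)
  then have "\<bar>f s\<bar> / s \<le> \<bar>d\<bar> + 1"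
    using s(1) by (simp add: abs_div)
  then have "\<bar>f s\<bar> \<le> (\<bar>d\<bar> + 1) * s"
    using s(1) by (simp add: divide_le_eq)
  then have "\<bar>f s\<bar>\<^sup>2 \<le> ((\<bar>d\<bar> + 1) * s)\<^sup>2"
    by (rule power_mono) simp
  then have fs: "(f s)\<^sup>2 \<le> (\<bar>d\<bar> + 1)\<^sup>2 * s\<^sup>2"
    by (simp add: power_mult_distrib)
  have "2 * m * \<bar>inner (vector [s, f s]) w\<bar> \<le> (norm (vector [s, f s] :: real^2))\<^sup>2"
    using H[of "vector [s, f s]"] s \<open>\<bar>f s\<bar> < h\<close> by auto
  then have "2 * m * s \<le> s\<^sup>2 + (f s)\<^sup>2"
    using s(1) w2 \<open>\<bar>w$1\<bar> = 1\<close> by (simp add: power2_norm_vec2 inner_vec2 abs_mult)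
  also have "\<dots> \<le> K * s * s"
    using fs by (simp add: K_def power2_eq_square algebra_simps)
  also have "\<dots> \<le> m * s"
    using s K by (intro mult_right_mono) (auto simp: le_divide_eq mult.commute)
  finally show False
    using s(1) m by simp
qed

lemma tangent_balls_at_interior_point_of_segment:
  fixes X Y c :: "'a::euclidean_space"
  assumes between: "c \<in> closed_segment X Y" and "X \<noteq> c" "Y \<noteq> c"
  obtains e m where "norm e = 1" "m > 0"
    "ball (c + m *\<^sub>R e) m \<subseteq> ball Y (dist Y c)" "ball (c + (- m) *\<^sub>R e) m \<subseteq> ball X (dist X c)"
proof -
  obtain t where t: "0 \<le> t" "t \<le> 1" "c = (1 - t) *\<^sub>R X + t *\<^sub>R Y"
    using between by (auto simp: closed_segment_def)
  define D where "D = norm (Y - X)"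
  define e where "e = (1/D) *\<^sub>R (Y - X)"
  have "t \<noteq> 0" "t \<noteq> 1" "D > 0"
    using t \<open>X \<noteq> c\<close> \<open>Y \<noteq> c\<close> by (auto simp: D_def)
  then have e: "norm e = 1" and YX: "Y - X = D *\<^sub>R e"
    by (simp_all add: e_def D_def)
  define \<rho> \<sigma> where "\<rho> = t * D" and "\<sigma> = (1 - t) * D"
  have "c - X = t *\<^sub>R (Y - X)" "Y - c = (1 - t) *\<^sub>R (Y - X)"
    using t(3) by (simp_all add: algebra_simps)
  then have X_eq: "X = c + (- \<rho>) *\<^sub>R e" and Y_eq: "Y = c + \<sigma> *\<^sub>R e"
    unfolding YX \<rho>_def \<sigma>_def by (simp_all add: algebra_simps)
  have on_line: "dist (c + a *\<^sub>R e) (c + b *\<^sub>R e) = \<bar>a - b\<bar>" for a b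
    using e by (simp add: dist_norm flip: scaleR_diff_left)
  have "\<rho> > 0" "\<sigma> > 0"
    using t \<open>t \<noteq> 0\<close> \<open>t \<noteq> 1\<close> \<open>D > 0\<close> by (simp_all add: \<rho>_def \<sigma>_def)
  then have "dist X c = \<rho>" "dist Y c = \<sigma>"
    using on_line[of "- \<rho>" 0] on_line[of \<sigma> 0] X_eq Y_eq by simp_all
  define m where "m = min \<rho> \<sigma>"
  have m: "m > 0" "m \<le> \<rho>" "m \<le> \<sigma>"
    using \<open>\<rho> > 0\<close> \<open>\<sigma> > 0\<close> by (simp_all add: m_def)
  have "ball (c + m *\<^sub>R e) m \<subseteq> ball Y \<sigma>"
    unfolding ball_subset_ball_iff Y_eq on_line using m by simp
  moreover have "ball (c + (- m) *\<^sub>R e) m \<subseteq> ball X \<rho>"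
    unfolding ball_subset_ball_iff X_eq on_line using m by simp
  ultimately show thesis
    using that e m(1) \<open>dist X c = \<rho>\<close> \<open>dist Y c = \<sigma>\<close> by blast
qed

text \<open>In the chart at c two balls inside \<Omega> tangent at c pull back to balls tangent at 0, which
  the region below the graph must meet.\<close>
lemma C2_boundary_no_interior_balls_on_both_sides:
  assumes C2: "C2_boundary \<Omega>" and c: "c \<in> frontier \<Omega>" and "X \<noteq> c" "Y \<noteq> c"
    and between: "c \<in> closed_segment X Y"
    and X: "ball X (dist X c) \<subseteq> \<Omega>" and Y: "ball Y (dist Y c) \<subseteq> \<Omega>"
  shows False
proof -
  obtain R f r h where R: "orthogonal_transformation R" and "C2_real f" "f 0 = 0" "r > 0" "h > 0"
    and chart: "\<And>y::pt. \<bar>y$1\<bar> < r \<and> \<bar>y$2\<bar> < h \<Longrightarrow> (c + R y \<in> \<Omega> \<longleftrightarrow> y$2 > f (y$1))"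
    using C2 c unfolding C2_boundary_def by metis
  then obtain d where f': "(f has_real_derivative d) (at 0)"
    unfolding C2_real_def by blast
  obtain e m where e: "norm e = 1" and "m > 0"
    and "ball (c + m *\<^sub>R e) m \<subseteq> ball Y (dist Y c)" "ball (c + (- m) *\<^sub>R e) m \<subseteq> ball X (dist X c)"
    by (rule tangent_balls_at_interior_point_of_segment[OF between \<open>X \<noteq> c\<close> \<open>Y \<noteq> c\<close>])
  then have tangent_balls: "ball (c + s *\<^sub>R e) m \<subseteq> \<Omega>" if "s = m \<or> s = - m" for s
    using that X Y by auto
  obtain w where w: "R w = e"
    using orthogonal_transformation_surj[OF R] by (metis surjD)
  then have "norm w = 1"
    using e orthogonal_transformation_norm[OF R] by metis
  then obtain y :: pt where y: "\<bar>y$1\<bar> < r" "\<bar>y$2\<bar> < h" "y$2 \<le> f (y$1)"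
    and "y \<in> ball (m *\<^sub>R w) m \<union> ball ((- m) *\<^sub>R w) m"
    using subgraph_meets_tangent_balls[OF _ \<open>m > 0\<close> \<open>r > 0\<close> \<open>h > 0\<close> \<open>f 0 = 0\<close> f'] by blast
  then obtain s where "s = m \<or> s = - m" "dist y (s *\<^sub>R w) < m"
    by (metis Un_iff mem_ball dist_commute)
  moreover have "dist (c + R y) (c + s *\<^sub>R e) = dist y (s *\<^sub>R w)"
    using orthogonal_transformation_norm[OF R, of "y - s *\<^sub>R w"] R w
    by (simp add: dist_norm linear_diff orthogonal_transformation_linear orthogonal_transformation_scaleR)
  ultimately have "c + R y \<in> ball (c + s *\<^sub>R e) m"
    by (simp add: dist_commute)
  then have "c + R y \<in> \<Omega>"
    using tangent_balls \<open>s = m \<or> s = - m\<close> by blast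
  then show False
    using chart y by force
qed

section \<open>Disjointness of the segments of a minimal connection\<close>

lemma mem_closed_segment_if_dist_add:
  fixes a b x :: "'a::euclidean_space"
  shows "dist a b = dist a x + dist x b \<Longrightarrow> x \<in> closed_segment a b"
  by (simp add: between_mem_segment[symmetric] between)

lemma mset_doubleton_if_doubleton:
  "{u, v} = {x, y} \<Longrightarrow> u \<noteq> v \<Longrightarrow> {#u, v#} = {#x, y#}"
  by (auto simp: doubleton_eq_iff add_mset_commute)

lemma minimal_connection_shared_endpoint_between:
  assumes mc: "minimal_connection \<Omega> a p q P Q" and \<Omega>: "open \<Omega>" and a: "a ` {..<p} \<subseteq> \<Omega>"
    and jk: "j < q" "k < q" "j \<noteq> k"
    and ends_j: "{P j, Q j} = {c, X}" and ends_k: "{P k, Q k} = {c, Y}"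
  shows "c \<in> closed_segment X Y"
proof -
  have conn: "connection \<Omega> a p q P Q"
    using mc by (simp add: minimal_connection_def)
  then have "P j \<noteq> Q j" "P k \<noteq> Q k"
    using connection_segment_endpoints(1) jk by blast+
  then have "{#c, c#} + {#X, Y#} = {#P j, Q j#} + {#P k, Q k#}"
    using mset_doubleton_if_doubleton[OF ends_j] mset_doubleton_if_doubleton[OF ends_k]
    by (simp add: add_mset_commute)
  then have "dist (P j) (Q j) + dist (P k) (Q k) \<le> dist c c + dist X Y"
    by (rule minimal_connection_exchange_pair[OF mc \<Omega> a jk])
  moreover have "dist (P j) (Q j) = dist X c" "dist (P k) (Q k) = dist c Y"
    using ends_j ends_k by (auto simp: doubleton_eq_iff dist_commute)
  ultimately have "dist X Y = dist X c + dist c Y"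
    using dist_triangle[of X Y c] by simp
  then show ?thesis
    by (rule mem_closed_segment_if_dist_add)
qed

text \<open>A shared endpoint c lies between the other two endpoints. On the frontier this contradicts
  the interior ball condition; at a site a i the odd degree forces a third segment [c, Z], and c
  cannot lie on all three sides of the triangle X Y Z.\<close>
lemma minimal_connection_no_shared_endpoint:
  assumes mc: "minimal_connection \<Omega> a p q P Q" and \<Omega>: "open \<Omega>" and a: "a ` {..<p} \<subseteq> \<Omega>"
    and C2: "C2_boundary \<Omega>" and jk: "j < q" "k < q" "j \<noteq> k"
  shows "{P j, Q j} \<inter> {P k, Q k} = {}"
proof (rule ccontr)
  assume "{P j, Q j} \<inter> {P k, Q k} \<noteq> {}"
  then obtain c where c: "c \<in> {P j, Q j}" "c \<in> {P k, Q k}"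
    by blast
  define other where "other l = (if c = P l then Q l else P l)" for l
  have conn: "connection \<Omega> a p q P Q"
    using mc by (simp add: minimal_connection_def)
  have ends: "{P l, Q l} = {c, other l}" "other l \<noteq> c" if "l < q" "c \<in> {P l, Q l}" for l
    using that connection_segment_endpoints(1)[OF conn that(1)] by (auto simp: other_def)
  have between: "c \<in> closed_segment (other l) (other n)"
    if "l < q" "n < q" "l \<noteq> n" "c \<in> {P l, Q l}" "c \<in> {P n, Q n}" for l n
    using that ends by (intro minimal_connection_shared_endpoint_between[OF mc \<Omega> a]) auto
  show False
  proof (cases "c \<in> \<Omega>")
    case False
    moreover have "c \<in> closure \<Omega>"
      using c connection_segment_endpoints(2,3)[OF conn jk(1)] by auto
    ultimately have "c \<in> frontier \<Omega>"
      using \<Omega> by (simp add: frontier_def interior_open)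
    then show False
      using C2_boundary_no_interior_balls_on_both_sides[OF C2 _ _ _ between[OF jk c]] ends jk c
        minimal_connection_ball_subset[OF mc \<Omega> a] by metis
  next
    case True
    then obtain i where i: "i < p" "c = a i"
      using c connection_segment_endpoints(4,5)[OF conn jk(1)] \<Omega>
      by (auto simp: frontier_def interior_open)
    define S where "S = {l. l < q \<and> a i \<in> {P l, Q l}}"
    have "odd (card S)"
      using conn i by (simp add: connection_def S_def)
    moreover have "j \<in> S" "k \<in> S"
      using c jk i by (auto simp: S_def)
    moreover have "S \<noteq> {j, k}"
      using \<open>odd (card S)\<close> jk(3) by auto
    ultimately obtain n where n: "n < q" "c \<in> {P n, Q n}" "n \<noteq> j" "n \<noteq> k"
      using i by (auto simp: S_def)
    have "c \<in> {other j, other k, other n}"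
      using between[OF jk c] between[OF jk(1) n(1) n(3)[symmetric] c(1) n(2)]
        between[OF jk(2) n(1) n(4)[symmetric] c(2) n(2)]
      by (rule common_point_of_triangle_sides)
    then show False
      using ends jk c n by auto
  qed
qed

text \<open>By the exchange argument a common point x lies on every segment joining an endpoint of one
  segment to an endpoint of the other, which forces it to be a shared endpoint.\<close>
lemma minimal_connection_segments_disjoint:
  assumes mc: "minimal_connection \<Omega> a p q P Q" and \<Omega>: "open \<Omega>" and a: "a ` {..<p} \<subseteq> \<Omega>"
    and C2: "C2_boundary \<Omega>" and jk: "j < q" "k < q" "j \<noteq> k"
  shows "closed_segment (P j) (Q j) \<inter> closed_segment (P k) (Q k) = {}"
proof (rule ccontr)
  assume "closed_segment (P j) (Q j) \<inter> closed_segment (P k) (Q k) \<noteq> {}"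
  then obtain x where xj: "x \<in> closed_segment (P j) (Q j)" and xk: "x \<in> closed_segment (P k) (Q k)"
    by blast
  have conn: "connection \<Omega> a p q P Q"
    using mc by (simp add: minimal_connection_def)
  have "P j \<noteq> Q j" "P k \<noteq> Q k"
    using connection_segment_endpoints(1)[OF conn] jk by blast+
  have cross: "x \<in> closed_segment u v" if u: "u \<in> {P j, Q j}" and v: "v \<in> {P k, Q k}" for u v
  proof -
    define u' v' where "u' = (if u = P j then Q j else P j)" and "v' = (if v = P k then Q k else P k)"
    have uj: "{P j, Q j} = {u, u'}" and vk: "{P k, Q k} = {v, v'}"
      using u v by (auto simp: u'_def v'_def)
    have "{#u, v#} + {#u', v'#} = {#P j, Q j#} + {#P k, Q k#}"
      using mset_doubleton_if_doubleton[OF uj \<open>P j \<noteq> Q j\<close>] mset_doubleton_if_doubleton[OF vk \<open>P k \<noteq> Q k\<close>]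
      by (simp add: add_mset_commute)
    then have "dist (P j) (Q j) + dist (P k) (Q k) \<le> dist u v + dist u' v'"
      by (rule minimal_connection_exchange_pair[OF mc \<Omega> a jk])
    moreover have "x \<in> closed_segment u u'" "x \<in> closed_segment v v'"
      using xj xk uj vk by (auto simp: doubleton_eq_iff closed_segment_commute)
    then have "dist u u' = dist u x + dist x u'" "dist v v' = dist v x + dist x v'"
      by (simp_all add: between_mem_segment[symmetric] between)
    moreover have "dist (P j) (Q j) = dist u u'" "dist (P k) (Q k) = dist v v'"
      using uj vk by (auto simp: doubleton_eq_iff dist_commute)
    ultimately have "dist u v = dist u x + dist x v"
      using dist_triangle[of u v x] dist_triangle[of u' v' x] dist_commute[of x u'] dist_commute[of x v]
      by linarith
    then show ?thesis
      by (rule mem_closed_segment_if_dist_add)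
  qed
  have PP: "x \<in> closed_segment (P j) (P k)" and QP: "x \<in> closed_segment (Q j) (P k)"
    and PQ: "x \<in> closed_segment (P j) (Q k)" and QQ: "x \<in> closed_segment (Q j) (Q k)"
    by (simp_all add: cross)
  have "x \<in> {P j, Q j, P k}" "x \<in> {P j, Q j, Q k}"
    using common_point_of_triangle_sides[OF xj PP QP] common_point_of_triangle_sides[OF xj PQ QQ] .
  moreover have "x \<in> {P k, Q k, P j}" "x \<in> {P k, Q k, Q j}"
    using common_point_of_triangle_sides[OF xk, of "P j"] common_point_of_triangle_sides[OF xk, of "Q j"]
      PP QP PQ QQ by (simp_all add: closed_segment_commute)
  ultimately have "x \<in> {P j, Q j} \<inter> {P k, Q k}"
    using \<open>P j \<noteq> Q j\<close> \<open>P k \<noteq> Q k\<close> by auto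
  then show False
    using minimal_connection_no_shared_endpoint[OF mc \<Omega> a C2 jk] by blast
qed

section \<open>A lower bound for the one-dimensional Hausdorff measure\<close>

lemma interval_length_le_suminf_diameter:
  fixes f :: "'a::metric_space \<Rightarrow> real" and D :: "nat \<Rightarrow> 'a set"
  assumes f: "1-lipschitz_on UNIV f" and bounded: "\<And>n. bounded (D n)"
    and cover: "{l..u} \<subseteq> (\<Union>n. f ` D n)" and "l \<le> u"
  shows "ennreal (u - l) \<le> (\<Sum>n. ennreal (2 * diameter (D n)))"
proof -
  define I where "I n = (if D n = {} then {} else
      {f (SOME z. z \<in> D n) - diameter (D n) .. f (SOME z. z \<in> D n) + diameter (D n)})" for n
  have image_in_I: "f ` D n \<subseteq> I n" for n
  proof (cases "D n = {}")
    case False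
    define z where "z = (SOME z. z \<in> D n)"
    have "z \<in> D n"
      using False by (simp add: z_def some_in_eq)
    show ?thesis
    proof
      fix r assume "r \<in> f ` D n"
      then obtain w where "w \<in> D n" "r = f w" by blast
      moreover have "dist (f w) (f z) \<le> diameter (D n)"
        using lipschitz_onD[OF f, of w z] diameter_bounded_bound[OF bounded \<open>w \<in> D n\<close> \<open>z \<in> D n\<close>]
        by simp
      ultimately have "\<bar>r - f z\<bar> \<le> diameter (D n)"
        by (simp add: dist_real_def)
      then show "r \<in> I n"
        using False by (simp add: I_def z_def[symmetric] abs_le_iff)
    qed
  qed (simp add: I_def)
  have I_sets: "I n \<in> sets lborel" for n
    by (simp add: I_def)
  have "{l..u} \<subseteq> (\<Union>n. I n)"
  proof
    fix r assume "r \<in> {l..u}"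
    then obtain n where "r \<in> f ` D n"
      using cover by blast
    then show "r \<in> (\<Union>n. I n)"
      using image_in_I by blast
  qed
  then have "emeasure lborel {l..u} \<le> emeasure lborel (\<Union>n. I n)"
    using I_sets by (intro emeasure_mono) auto
  also have "\<dots> \<le> (\<Sum>n. emeasure lborel (I n))"
    using I_sets by (intro emeasure_subadditive_countably) auto
  also have "\<dots> \<le> (\<Sum>n. ennreal (2 * diameter (D n)))"
  proof (intro suminf_le allI)
    fix n
    show "emeasure lborel (I n) \<le> ennreal (2 * diameter (D n))"
      using diameter_ge_0[OF bounded, of n] by (simp add: I_def)
  qed auto
  finally show ?thesis
    using \<open>l \<le> u\<close> by simp
qed

text \<open>Project onto the line through x and y.\<close>
lemma dist_le_suminf_diameter_cover:
  fixes K :: "'a::real_inner set" and D :: "nat \<Rightarrow> 'a set"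
  assumes K: "connected K" "x \<in> K" "y \<in> K" and cover: "K \<subseteq> (\<Union>n. D n)"
    and bounded: "\<And>n. bounded (D n)"
  shows "ennreal (dist x y) \<le> (\<Sum>n. ennreal (2 * diameter (D n)))"
proof (cases "x = y")
  case False
  define d where "d = dist x y"
  have d: "d > 0" using False by (simp add: d_def)
  define v where "v = (1/d) *\<^sub>R (y - x)"
  define \<pi> where "\<pi> = (\<lambda>z. inner (z - x) v)"
  have "norm v = 1"
    using d by (simp add: v_def d_def dist_norm norm_minus_commute)
  have "dist (\<pi> z) (\<pi> z') \<le> 1 * dist z z'" for z z'
  proof -
    have "\<pi> z - \<pi> z' = inner (z - z') v"
      by (simp add: \<pi>_def inner_diff_left)
    then have "\<bar>\<pi> z - \<pi> z'\<bar> \<le> norm (z - z') * norm v"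
      by (simp add: Cauchy_Schwarz_ineq2)
    then show ?thesis
      using \<open>norm v = 1\<close> by (simp add: dist_norm dist_real_def)
  qed
  then have "1-lipschitz_on UNIV \<pi>"
    by (intro lipschitz_onI) auto
  have "\<pi> x = 0" by (simp add: \<pi>_def)
  moreover have "\<pi> y = d"
    using d by (simp add: \<pi>_def v_def d_def dist_norm norm_minus_commute power2_eq_square
        flip: power2_norm_eq_inner)
  moreover have "continuous_on K \<pi>"
    unfolding \<pi>_def by (intro continuous_intros)
  then have "connected (\<pi> ` K)"
    using K(1) by (rule connected_continuous_image)
  ultimately have "{0..d} \<subseteq> \<pi> ` K"
    using connected_contains_Icc K(2,3) by (metis image_eqI)
  have "{0..d} \<subseteq> (\<Union>n. \<pi> ` D n)"
  proof
    fix r assume "r \<in> {0..d}"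
    then obtain z n where "z \<in> D n" "r = \<pi> z"
      using \<open>{0..d} \<subseteq> \<pi> ` K\<close> cover by blast
    then show "r \<in> (\<Union>n. \<pi> ` D n)"
      by blast
  qed
  then have "ennreal (d - 0) \<le> (\<Sum>n. ennreal (2 * diameter (D n)))"
    using d by (intro interval_length_le_suminf_diameter[where D = D, OF \<open>1-lipschitz_on UNIV \<pi>\<close> bounded])
      auto
  then show ?thesis
    by (simp add: d_def)
qed simp

lemma finite_disjoint_compacts_separated:
  fixes K :: "'i \<Rightarrow> 'a::heine_borel set"
  assumes "finite F" and compact: "\<And>k. k \<in> F \<Longrightarrow> compact (K k)"
    and disjoint: "\<And>k l. k \<in> F \<Longrightarrow> l \<in> F \<Longrightarrow> k \<noteq> l \<Longrightarrow> K k \<inter> K l = {}"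
  obtains \<rho> where "\<rho> > 0"
    "\<And>k l x y. k \<in> F \<Longrightarrow> l \<in> F \<Longrightarrow> k \<noteq> l \<Longrightarrow> x \<in> K k \<Longrightarrow> y \<in> K l \<Longrightarrow> \<rho> \<le> dist x y"
proof -
  define Pairs where "Pairs = {(k, l). k \<in> F \<and> l \<in> F \<and> k \<noteq> l}"
  have "\<forall>kl\<in>Pairs. \<exists>\<delta>>0. \<forall>x\<in>K (fst kl). \<forall>y\<in>K (snd kl). \<delta> \<le> dist x y"
    using compact disjoint by (auto simp: Pairs_def intro!: separate_compact_closed compact_imp_closed)
  then obtain \<delta> where \<delta>: "\<And>kl. kl \<in> Pairs \<Longrightarrow> \<delta> kl > 0 \<and> (\<forall>x\<in>K (fst kl). \<forall>y\<in>K (snd kl). \<delta> kl \<le> dist x y)"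
    by metis
  define \<rho> where "\<rho> = Min (insert 1 (\<delta> ` Pairs))"
  have "finite Pairs"
    using \<open>finite F\<close> by (auto simp: Pairs_def intro: finite_subset[of _ "F \<times> F"])
  then have "\<rho> > 0"
    using \<delta> by (auto simp: \<rho>_def)
  moreover have "\<rho> \<le> dist x y" if "k \<in> F" "l \<in> F" "k \<noteq> l" "x \<in> K k" "y \<in> K l" for k l x y
  proof -
    have "(k, l) \<in> Pairs" using that by (simp add: Pairs_def)
    then have "\<rho> \<le> \<delta> (k, l)"
      using \<open>finite Pairs\<close> by (simp add: \<rho>_def)
    also have "\<delta> (k, l) \<le> dist x y"
      using \<delta>[OF \<open>(k, l) \<in> Pairs\<close>] that by simp
    finally show ?thesis .
  qed
  ultimately show thesis
    using that by blast
qed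

text \<open>A set of diameter less than \<rho> meets at most one of the K k.\<close>
lemma sum_diameter_meeting_separated_le:
  assumes "finite F"
    and separated: "\<And>k l x y. k \<in> F \<Longrightarrow> l \<in> F \<Longrightarrow> k \<noteq> l \<Longrightarrow> x \<in> K k \<Longrightarrow> y \<in> K l \<Longrightarrow> \<rho> \<le> dist x y"
    and small: "bounded C" "diameter C < \<rho>"
  shows "(\<Sum>k\<in>F. ennreal (2 * diameter (if C \<inter> K k \<noteq> {} then C else {}))) \<le> ennreal (2 * diameter C)"
proof (cases "\<exists>k\<in>F. C \<inter> K k \<noteq> {}")
  case True
  then obtain k where k: "k \<in> F" "C \<inter> K k \<noteq> {}" by blast
  have "C \<inter> K l = {}" if "l \<in> F" "l \<noteq> k" for l
  proof (rule ccontr)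
    assume "C \<inter> K l \<noteq> {}"
    then obtain z z' where "z \<in> C" "z \<in> K k" "z' \<in> C" "z' \<in> K l"
      using k by blast
    then have "\<rho> \<le> dist z z'" "dist z z' \<le> diameter C"
      using separated[OF k(1) that(1) that(2)[symmetric]] diameter_bounded_bound[OF small(1)] by auto
    then show False
      using small(2) by linarith
  qed
  then have "(\<Sum>l\<in>F. ennreal (2 * diameter (if C \<inter> K l \<noteq> {} then C else {}))) =
      ennreal (2 * diameter C)"
    using \<open>finite F\<close> k by (subst sum.remove[of _ k]) auto
  then show ?thesis
    by simp
qed simp

lemma card_mult_le_suminf_diameter_cover:
  fixes K :: "'i \<Rightarrow> 'a::real_inner set"
  assumes "finite F" and connected: "\<And>k. k \<in> F \<Longrightarrow> connected (K k)"
    and far: "\<And>k. k \<in> F \<Longrightarrow> \<exists>x\<in>K k. \<exists>y\<in>K k. \<eta> \<le> dist x y"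
    and separated: "\<And>k l x y. k \<in> F \<Longrightarrow> l \<in> F \<Longrightarrow> k \<noteq> l \<Longrightarrow> x \<in> K k \<Longrightarrow> y \<in> K l \<Longrightarrow> \<rho> \<le> dist x y"
    and cover: "(\<Union>k\<in>F. K k) \<subseteq> (\<Union>n. C n)" and small: "\<And>n. bounded (C n) \<and> diameter (C n) < \<rho>"
  shows "ennreal (real (card F) * \<eta>) \<le> (\<Sum>n. ennreal (2 * diameter (C n)))"
proof -
  define D where "D k n = (if C n \<inter> K k \<noteq> {} then C n else {})" for k n
  have each: "ennreal \<eta> \<le> (\<Sum>n. ennreal (2 * diameter (D k n)))" if k: "k \<in> F" for k
  proof -
    obtain x y where "x \<in> K k" "y \<in> K k" "\<eta> \<le> dist x y"
      using far[OF k] by blast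
    moreover have "K k \<subseteq> (\<Union>n. D k n)"
      using cover k by (force simp: D_def)
    ultimately show ?thesis
      using dist_le_suminf_diameter_cover[of "K k" x y "D k"] connected[OF k] small
      by (force simp: D_def intro: order_trans[OF ennreal_leI])
  qed
  have "ennreal (real (card F) * \<eta>) = (\<Sum>k\<in>F. ennreal \<eta>)"
    by (simp add: ennreal_mult' ennreal_of_nat_eq_real_of_nat)
  also have "\<dots> \<le> (\<Sum>k\<in>F. \<Sum>n. ennreal (2 * diameter (D k n)))"
    by (intro sum_mono each)
  also have "\<dots> = (\<Sum>n. \<Sum>k\<in>F. ennreal (2 * diameter (D k n)))"
    by (rule suminf_sum[symmetric]) auto
  also have "\<dots> \<le> (\<Sum>n. ennreal (2 * diameter (C n)))"
    unfolding D_def using small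
    by (intro suminf_le sum_diameter_meeting_separated_le[OF \<open>finite F\<close> separated]) auto
  finally show ?thesis .
qed

lemma hausdorff1_ge_disjoint_continua:
  fixes K :: "'i \<Rightarrow> pt set"
  assumes "finite F" and compact: "\<And>k. k \<in> F \<Longrightarrow> compact (K k)"
    and connected: "\<And>k. k \<in> F \<Longrightarrow> connected (K k)" and sub: "\<And>k. k \<in> F \<Longrightarrow> K k \<subseteq> S"
    and far: "\<And>k. k \<in> F \<Longrightarrow> \<exists>x\<in>K k. \<exists>y\<in>K k. \<eta> \<le> dist x y"
    and disjoint: "\<And>k l. k \<in> F \<Longrightarrow> l \<in> F \<Longrightarrow> k \<noteq> l \<Longrightarrow> K k \<inter> K l = {}"
  shows "ennreal (real (card F) * \<eta> / 2) \<le> hausdorff1 S"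
proof -
  obtain \<rho> where "\<rho> > 0" and separated:
      "\<And>k l x y. k \<in> F \<Longrightarrow> l \<in> F \<Longrightarrow> k \<noteq> l \<Longrightarrow> x \<in> K k \<Longrightarrow> y \<in> K l \<Longrightarrow> \<rho> \<le> dist x y"
    using finite_disjoint_compacts_separated[of F K] \<open>finite F\<close> compact disjoint by blast
  have "ennreal (real (card F) * \<eta> / 2) \<le> (\<Sum>n. ennreal (diameter (C n)))"
    if "S \<subseteq> (\<Union>n. C n)" "\<forall>n. bounded (C n) \<and> diameter (C n) \<le> \<rho>/2" for C
  proof -
    have "(\<Union>k\<in>F. K k) \<subseteq> (\<Union>n. C n)"
      using that(1) sub by blast
    moreover have "bounded (C n) \<and> diameter (C n) < \<rho>" for n
      using spec[OF that(2), of n] \<open>\<rho> > 0\<close> by linarith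
    ultimately have "ennreal (real (card F) * \<eta>) \<le> (\<Sum>n. ennreal (2 * diameter (C n)))"
      using card_mult_le_suminf_diameter_cover[where F = F and K = K and \<eta> = \<eta> and \<rho> = \<rho> and C = C]
        \<open>finite F\<close> connected far separated by blast
    moreover have "2 * ennreal (real (card F) * \<eta> / 2) = ennreal (real (card F) * \<eta>)"
      using ennreal_mult'[of 2 "real (card F) * \<eta> / 2"] by simp
    ultimately have "2 * ennreal (real (card F) * \<eta> / 2) \<le> 2 * (\<Sum>n. ennreal (diameter (C n)))"
      by (simp add: ennreal_mult')
    then show ?thesis
      by (subst (asm) ennreal_mult_le_mult_iff) auto
  qed
  then have "ennreal (real (card F) * \<eta> / 2) \<le> (INF C\<in>{C. S \<subseteq> (\<Union>n. C n) \<and> (\<forall>n. bounded (C n) \<and> diameter (C n) \<le> \<rho>/2)}.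
        (\<Sum>n. ennreal (diameter (C n))))"
    by (intro INF_greatest) blast
  also have "\<dots> \<le> hausdorff1 S"
    unfolding hausdorff1_def using \<open>\<rho> > 0\<close> by (intro SUP_upper2[of "\<rho>/2"]) auto
  finally show ?thesis .
qed

lemma finite_if_card_mult_bounded:
  assumes "c > 0" and "M < \<infinity>"
    and bound: "\<And>F. finite F \<Longrightarrow> F \<subseteq> X \<Longrightarrow> ennreal (real (card F) * c) \<le> M"
  shows "finite X"
proof (rule ccontr)
  assume "infinite X"
  obtain m where m: "M = ennreal m" "0 \<le> m"
    using \<open>M < \<infinity>\<close> by (cases M) auto
  define N where "N = nat \<lceil>m / c\<rceil> + 1"
  have "m / c < real N"
    unfolding N_def by linarith
  then have "m < real N * c"
    using \<open>c > 0\<close> by (simp add: divide_less_eq)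
  moreover obtain F where "finite F" "card F = N" "F \<subseteq> X"
    using infinite_arbitrarily_large[OF \<open>infinite X\<close>] by blast
  then have "real N * c \<le> m"
    using bound m by fastforce
  ultimately show False
    by simp
qed

section \<open>Arcs\<close>

lemma arc_interval_subset: "arc_interval U t \<subseteq> U"
  unfolding arc_interval_def using connected_component_subset by auto

lemma arc_interval_zero_iff_one:
  assumes "0 \<in> U \<longleftrightarrow> 1 \<in> U"
  shows "0 \<in> arc_interval U t \<longleftrightarrow> 1 \<in> arc_interval U t"
proof -
  have "x \<in> U" if "x \<in> connected_component_set U y" for x y
    using that connected_component_subset by blast
  then show ?thesis
    unfolding arc_interval_def using assms by auto
qed

lemma arc_interval_eq_or_disjoint:
  "arc_interval U t = arc_interval U t' \<or> arc_interval U t \<inter> arc_interval U t' = {}"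
proof -
  let ?C = "connected_component_set U"
  have apart: "?C s \<inter> ?C c = {}" if "c \<notin> ?C s" for s c
  proof (rule ccontr)
    assume "?C s \<inter> ?C c \<noteq> {}"
    then have "c \<in> U" "?C s = ?C c"
      using connected_component_overlap by blast+
    then show False
      using that by simp
  qed
  have nowrap: "?C s \<inter> (?C 0 \<union> ?C 1) = {}" if "0 \<notin> ?C s" "1 \<notin> ?C s" for s
    using apart[OF that(1)] apart[OF that(2)] by blast
  consider "0 \<in> ?C t \<or> 1 \<in> ?C t" "0 \<in> ?C t' \<or> 1 \<in> ?C t'"
    | "\<not> (0 \<in> ?C t \<or> 1 \<in> ?C t)" "0 \<in> ?C t' \<or> 1 \<in> ?C t'"
    | "0 \<in> ?C t \<or> 1 \<in> ?C t" "\<not> (0 \<in> ?C t' \<or> 1 \<in> ?C t')"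
    | "\<not> (0 \<in> ?C t \<or> 1 \<in> ?C t)" "\<not> (0 \<in> ?C t' \<or> 1 \<in> ?C t')"
    by blast
  then show ?thesis
  proof cases
    case 1
    then show ?thesis by (simp add: arc_interval_def)
  next
    case 2
    then show ?thesis unfolding arc_interval_def using nowrap[of t] by auto
  next
    case 3
    then show ?thesis unfolding arc_interval_def using nowrap[of t'] by auto
  next
    case 4
    then show ?thesis using connected_component_nonoverlap[of U t t'] by (auto simp: arc_interval_def)
  qed
qed

lemma connected_component_connecting_compact:
  fixes g :: "real \<Rightarrow> 'a::topological_space"
  assumes g: "continuous_on {0..1} g" and U: "U \<subseteq> {0..1}"
    and x: "x \<in> connected_component_set U z" and y: "y \<in> connected_component_set U z"
  obtains S where "compact S" "S \<subseteq> connected_component_set U z" "connected (g ` S)" "x \<in> S" "y \<in> S"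
proof -
  have "min x y \<in> connected_component_set U z" "max x y \<in> connected_component_set U z"
    using x y by (simp_all add: min_def max_def)
  then have sub: "{min x y..max x y} \<subseteq> connected_component_set U z"
    by (rule connected_contains_Icc[OF connected_connected_component])
  then have "continuous_on {min x y..max x y} g"
    using connected_component_subset U continuous_on_subset[OF g] by (meson subset_trans)
  then have "connected (g ` {min x y..max x y})"
    by (rule connected_continuous_image) simp
  then show thesis
    using that[OF _ sub] by simp
qed

lemma wrapping_components_connecting_compact:
  fixes g :: "real \<Rightarrow> 'a::topological_space"
  assumes g: "continuous_on {0..1} g" "g 0 = g 1" and U: "U \<subseteq> {0..1}"
    and x: "x \<in> connected_component_set U 0" and y: "y \<in> connected_component_set U 1"
  obtains S where "compact S" "S \<subseteq> connected_component_set U 0 \<union> connected_component_set U 1"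
    "connected (g ` S)" "x \<in> S" "y \<in> S"
proof -
  have "0 \<in> connected_component_set U 0" "1 \<in> connected_component_set U 1"
    using x y connected_component_in by auto
  then have "{0..x} \<subseteq> connected_component_set U 0" "{y..1} \<subseteq> connected_component_set U 1"
    using connected_contains_Icc[OF connected_connected_component] x y by blast+
  then have sub: "{0..x} \<union> {y..1} \<subseteq> connected_component_set U 0 \<union> connected_component_set U 1"
    by blast
  have "x \<in> {0..1}" "y \<in> {0..1}"
    using x y connected_component_subset U by blast+
  then have "connected (g ` {0..x})" "connected (g ` {y..1})"
    by (intro connected_continuous_image continuous_on_subset[OF g(1)]; auto)+
  moreover have "g 0 \<in> g ` {0..x}"
    using \<open>x \<in> {0..1}\<close> by auto
  moreover have "g 0 \<in> g ` {y..1}"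
    using \<open>y \<in> {0..1}\<close> g(2) by auto
  ultimately have "connected (g ` ({0..x} \<union> {y..1}))"
    unfolding image_Un by (intro connected_Un) auto
  then show thesis
    using that[OF compact_Un[OF compact_Icc compact_Icc] sub] \<open>x \<in> {0..1}\<close> \<open>y \<in> {0..1}\<close>
    by simp
qed

lemma arc_interval_connecting_compact:
  fixes g :: "real \<Rightarrow> 'a::topological_space"
  assumes g: "continuous_on {0..1} g" "g 0 = g 1" and U: "U \<subseteq> {0..1}"
    and x: "x \<in> arc_interval U t" and y: "y \<in> arc_interval U t"
  obtains S where "compact S" "S \<subseteq> arc_interval U t" "connected (g ` S)" "x \<in> S" "y \<in> S"
proof -
  let ?C = "connected_component_set U"
  show thesis
  proof (cases "0 \<in> ?C t \<or> 1 \<in> ?C t")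
    case False
    then have J: "arc_interval U t = ?C t"
      by (simp add: arc_interval_def)
    obtain S where "compact S" "S \<subseteq> ?C t" "connected (g ` S)" "x \<in> S" "y \<in> S"
      using connected_component_connecting_compact[OF g(1) U] x y unfolding J by blast
    then show thesis
      using that unfolding J by blast
  next
    case True
    then have J: "arc_interval U t = ?C 0 \<union> ?C 1"
      by (simp add: arc_interval_def)
    have "x \<in> ?C 0 \<union> ?C 1" "y \<in> ?C 0 \<union> ?C 1"
      using x y unfolding J .
    then consider "x \<in> ?C 0" "y \<in> ?C 0" | "x \<in> ?C 1" "y \<in> ?C 1" | "x \<in> ?C 0" "y \<in> ?C 1"
      | "x \<in> ?C 1" "y \<in> ?C 0"
      by blast
    then obtain S where "compact S" "S \<subseteq> ?C 0 \<union> ?C 1" "connected (g ` S)" "x \<in> S" "y \<in> S"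
    proof cases
      case 1
      then show thesis
        using connected_component_connecting_compact[OF g(1) U] that by (metis le_supI1)
    next
      case 2
      then show thesis
        using connected_component_connecting_compact[OF g(1) U] that by (metis le_supI2)
    next
      case 3
      then show thesis
        using wrapping_components_connecting_compact[OF g U] that by metis
    next
      case 4
      then show thesis
        using wrapping_components_connecting_compact[OF g U] that by metis
    qed
    then show thesis
      using that unfolding J by blast
  qed
qed

lemma arc_interval_far_connected_piece:
  fixes g :: "real \<Rightarrow> 'a::metric_space"
  assumes g: "continuous_on {0..1} g" "g 0 = g 1" and U: "U \<subseteq> {0..1}"
    and a: "a \<in> closure (arc_interval U t)" and b: "b \<in> closure (arc_interval U t)"
    and far: "\<delta> \<le> dist (g a) (g b)" and "\<delta> > 0"
  obtains S where "compact S" "S \<subseteq> arc_interval U t" "connected (g ` S)"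
    "\<exists>x\<in>g ` S. \<exists>y\<in>g ` S. \<delta>/2 \<le> dist x y"
proof -
  let ?J = "arc_interval U t"
  have "closure ?J \<subseteq> {0..1}"
    using arc_interval_subset U by (intro closure_minimal) auto
  have approx: "\<exists>c'\<in>?J. dist (g c') (g c) < \<delta>/4" if c: "c \<in> closure ?J" for c
  proof -
    obtain e where "e > 0" and e: "\<And>c'. c' \<in> {0..1} \<Longrightarrow> dist c' c < e \<Longrightarrow> dist (g c') (g c) < \<delta>/4"
      using g(1) c \<open>closure ?J \<subseteq> {0..1}\<close> \<open>\<delta> > 0\<close> unfolding continuous_on_iff
      by (metis subsetD zero_less_divide_iff zero_less_numeral)
    then obtain c' where "c' \<in> ?J" "dist c' c < e"
      using c unfolding closure_approachable by blast
    then show ?thesis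
      using e arc_interval_subset U by blast
  qed
  obtain a' b' where "a' \<in> ?J" "b' \<in> ?J" "dist (g a') (g a) < \<delta>/4" "dist (g b') (g b) < \<delta>/4"
    using approx[OF a] approx[OF b] by blast
  moreover have "dist (g a) (g b) \<le> dist (g a') (g a) + dist (g a') (g b') + dist (g b') (g b)"
    using dist_triangle[of "g a" "g b" "g a'"] dist_triangle[of "g a'" "g b" "g b'"]
    by (simp add: dist_commute)
  ultimately have "\<delta>/2 \<le> dist (g a') (g b')"
    using far by linarith
  moreover obtain S where "compact S" "S \<subseteq> ?J" "connected (g ` S)" "a' \<in> S" "b' \<in> S"
    using arc_interval_connecting_compact[OF g U \<open>a' \<in> ?J\<close> \<open>b' \<in> ?J\<close>] by blast
  ultimately show thesis
    using that by blast
qed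

lemma closed_curve_images_disjoint:
  fixes g :: "real \<Rightarrow> 'a"
  assumes inj: "inj_on g {0..<1}" and "g 0 = g 1"
    and "S \<subseteq> J" "S' \<subseteq> J'" "J \<inter> J' = {}" "J \<subseteq> {0..1}" "J' \<subseteq> {0..1}"
    and "0 \<in> J \<longleftrightarrow> 1 \<in> J" "0 \<in> J' \<longleftrightarrow> 1 \<in> J'"
  shows "g ` S \<inter> g ` S' = {}"
proof -
  \<comment> \<open>Identify the parameter 1 with 0, where g is injective.\<close>
  define r where "r s = (if s = 1 then 0 else s)" for s :: real
  have g_r: "g s = g (r s)" and r_in: "r s \<in> {0..<1}" if "s \<in> {0..1}" for s
    using that \<open>g 0 = g 1\<close> by (auto simp: r_def)
  have r_ne: "r s \<noteq> r s'" if "s \<in> J" "s' \<in> J'" for s s'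
    using that assms(5-9) by (auto simp: r_def)
  have "g s \<noteq> g s'" if "s \<in> S" "s' \<in> S'" for s s'
  proof -
    have "s \<in> J" "s' \<in> J'"
      using that assms(3,4) by auto
    then have "s \<in> {0..1}" "s' \<in> {0..1}"
      using assms(6,7) by auto
    then show ?thesis
      using r_ne[OF \<open>s \<in> J\<close> \<open>s' \<in> J'\<close>] r_in g_r inj by (metis inj_onD)
  qed
  then show ?thesis
    by blast
qed

section \<open>Finiteness of the essential arcs\<close>

lemma card_far_arc_intervals_le_hausdorff1:
  fixes g :: "real \<Rightarrow> pt"
  assumes g: "continuous_on {0..1} g" "inj_on g {0..<1}" "g 0 = g 1"
    and U: "U \<subseteq> {0..1}" "0 \<in> U \<longleftrightarrow> 1 \<in> U" and "\<delta> > 0"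
    and F: "finite F" "F \<subseteq> arc_interval U ` U"
    and far: "\<And>J. J \<in> F \<Longrightarrow> \<exists>a\<in>closure J. \<exists>b\<in>closure J. \<delta> \<le> dist (g a) (g b)"
  shows "ennreal (real (card F) * (\<delta>/4)) \<le> hausdorff1 (g ` {0..1})"
proof -
  have "\<exists>S. compact S \<and> S \<subseteq> J \<and> connected (g ` S) \<and> (\<exists>x\<in>g ` S. \<exists>y\<in>g ` S. \<delta>/2 \<le> dist x y)"
    if J: "J \<in> F" for J
  proof -
    obtain t where t: "J = arc_interval U t"
      using J F(2) by blast
    obtain a b where "a \<in> closure J" "b \<in> closure J" "\<delta> \<le> dist (g a) (g b)"
      using far[OF J] by blast
    then obtain S where "compact S" "S \<subseteq> J" "connected (g ` S)" "\<exists>x\<in>g ` S. \<exists>y\<in>g ` S. \<delta>/2 \<le> dist x y"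
      using arc_interval_far_connected_piece[OF g(1,3) U(1), of a t b \<delta>] \<open>\<delta> > 0\<close> unfolding t by blast
    then show ?thesis
      by blast
  qed
  then obtain S where S: "\<And>J. J \<in> F \<Longrightarrow> compact (S J) \<and> S J \<subseteq> J \<and> connected (g ` S J) \<and>
      (\<exists>x\<in>g ` S J. \<exists>y\<in>g ` S J. \<delta>/2 \<le> dist x y)"
    using bchoice[of F] by (metis (no_types, lifting))
  have J_sub: "J \<subseteq> {0..1}" "0 \<in> J \<longleftrightarrow> 1 \<in> J" if J: "J \<in> F" for J
  proof -
    obtain t where "J = arc_interval U t"
      using J F(2) by blast
    then show "J \<subseteq> {0..1}" "0 \<in> J \<longleftrightarrow> 1 \<in> J"
      using arc_interval_subset[of U t] U(1) arc_interval_zero_iff_one[OF U(2), of t] by auto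
  qed
  have "ennreal (real (card F) * (\<delta>/2) / 2) \<le> hausdorff1 (g ` {0..1})"
  proof (rule hausdorff1_ge_disjoint_continua[where K = "\<lambda>J. g ` S J"])
    fix J assume "J \<in> F"
    then have "S J \<subseteq> {0..1}"
      using S J_sub by blast
    then show "compact (g ` S J)" "g ` S J \<subseteq> g ` {0..1}"
      using S \<open>J \<in> F\<close> by (auto intro: compact_continuous_image continuous_on_subset[OF g(1)])
  next
    fix J J' assume "J \<in> F" "J' \<in> F" "J \<noteq> J'"
    moreover from this have "J \<inter> J' = {}"
      using F(2) arc_interval_eq_or_disjoint by blast
    ultimately show "g ` S J \<inter> g ` S J' = {}"
      using S J_sub by (intro closed_curve_images_disjoint[OF g(2,3)]) auto
  qed (use F(1) S in auto)
  then show ?thesis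
    by simp
qed

lemma essential_arc_endpoints_far:
  assumes disjoint: "\<And>j k. j < q \<Longrightarrow> k < q \<Longrightarrow> j \<noteq> k \<Longrightarrow>
      closed_segment (P j) (Q j) \<inter> closed_segment (P k) (Q k) = {}"
  obtains \<delta> where "\<delta> > 0"
    "\<And>g J. essential_arc \<Omega> q P Q g J \<Longrightarrow> \<exists>a\<in>closure J. \<exists>b\<in>closure J. \<delta> \<le> dist (g a) (g b)"
proof -
  define seg where "seg j = closed_segment (P j) (Q j)" for j
  obtain \<rho>1 where "\<rho>1 > 0"
    and \<rho>1: "\<And>j k x y. j < q \<Longrightarrow> k < q \<Longrightarrow> j \<noteq> k \<Longrightarrow> x \<in> seg j \<Longrightarrow> y \<in> seg k \<Longrightarrow> \<rho>1 \<le> dist x y"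
    using finite_disjoint_compacts_separated[of "{..<q}" seg] disjoint by (auto simp: seg_def)
  define inner_segs where "inner_segs = (\<Union>j\<in>{j. j < q \<and> seg j \<inter> frontier \<Omega> = {}}. seg j)"
  have "compact inner_segs" "inner_segs \<inter> frontier \<Omega> = {}"
    by (auto simp: inner_segs_def seg_def intro!: compact_UN)
  then obtain \<rho>2 where "\<rho>2 > 0" and \<rho>2: "\<And>x y. x \<in> inner_segs \<Longrightarrow> y \<in> frontier \<Omega> \<Longrightarrow> \<rho>2 \<le> dist x y"
    using separate_compact_closed[of inner_segs "frontier \<Omega>"] by auto
  show thesis
  proof (rule that[of "min \<rho>1 \<rho>2"])
    show "min \<rho>1 \<rho>2 > 0"
      using \<open>\<rho>1 > 0\<close> \<open>\<rho>2 > 0\<close> by simp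
    fix g J assume "essential_arc \<Omega> q P Q g J"
    then obtain e1 e2 where ends: "arc_endpoints g J = {e1, e2}"
      and "(\<exists>j<q. \<exists>k<q. seg j \<noteq> seg k \<and> e1 \<in> seg j \<and> e2 \<in> seg k) \<or>
           (e1 \<in> frontier \<Omega> \<and> (\<exists>j<q. e2 \<in> seg j \<and> seg j \<inter> frontier \<Omega> = {}))"
      unfolding essential_arc_def seg_def by blast
    then have "min \<rho>1 \<rho>2 \<le> dist e1 e2"
    proof (elim disjE exE conjE)
      fix j k assume "j < q" "k < q" "seg j \<noteq> seg k" "e1 \<in> seg j" "e2 \<in> seg k"
      then have "\<rho>1 \<le> dist e1 e2"
        using \<rho>1[of j k] by blast
      then show ?thesis
        by simp
    next
      fix j assume "e1 \<in> frontier \<Omega>" "j < q" "e2 \<in> seg j" "seg j \<inter> frontier \<Omega> = {}"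
      then have "\<rho>2 \<le> dist e1 e2"
        using \<rho>2[of e2 e1] by (auto simp: inner_segs_def dist_commute)
      then show ?thesis
        by simp
    qed
    moreover have "{e1, e2} \<subseteq> g ` (closure J - J)"
      using ends by (simp add: arc_endpoints_def)
    then obtain a b where "a \<in> closure J" "b \<in> closure J" "g a = e1" "g b = e2"
      by blast
    ultimately show "\<exists>a\<in>closure J. \<exists>b\<in>closure J. min \<rho>1 \<rho>2 \<le> dist (g a) (g b)"
      by blast
  qed
qed

lemma finite_Sigma_if_card_bounded_by_summable:
  fixes w :: "nat \<Rightarrow> ennreal"
  assumes "c > 0" and summable: "(\<Sum>i. w i) < \<infinity>"
    and bound: "\<And>i F. i \<in> I \<Longrightarrow> finite F \<Longrightarrow> F \<subseteq> E i \<Longrightarrow> ennreal (real (card F) * c) \<le> w i"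
  shows "finite (Sigma I E)"
proof -
  have finite_E: "finite (E i)" if "i \<in> I" for i
  proof (rule finite_if_card_mult_bounded[OF \<open>c > 0\<close>])
    have "w i \<le> (\<Sum>i. w i)"
      using sum_le_suminf[of w "{i}"] by simp
    then show "w i < \<infinity>"
      using summable by simp
  qed (use bound that in blast)
  define G where "G = {i\<in>I. E i \<noteq> {}}"
  have "finite G"
  proof (rule finite_if_card_mult_bounded[OF \<open>c > 0\<close> summable])
    fix F assume "finite F" "F \<subseteq> G"
    have "ennreal c \<le> w i" if i: "i \<in> F" for i
    proof -
      obtain J where "i \<in> I" "J \<in> E i"
        using \<open>F \<subseteq> G\<close> i by (auto simp: G_def)
      then show ?thesis
        using bound[of i "{J}"] by simp
    qed
    then have "ennreal (real (card F) * c) \<le> sum w F"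
      using \<open>c > 0\<close> sum_mono[of F "\<lambda>_. ennreal c" w]
      by (simp add: ennreal_mult' ennreal_of_nat_eq_real_of_nat)
    also have "\<dots> \<le> (\<Sum>i. w i)"
      using \<open>finite F\<close> by (intro sum_le_suminf) auto
    finally show "ennreal (real (card F) * c) \<le> (\<Sum>i. w i)" .
  qed
  moreover have "Sigma I E = Sigma G E"
    by (auto simp: G_def)
  ultimately show ?thesis
    using finite_E by (auto simp: G_def)
qed

lemma essential_arcs_eq_Sigma:
  "essential_arcs \<Omega> q P Q I \<gamma> = (SIGMA i:I.
     {J \<in> arc_interval (arc_params \<Omega> q P Q (\<gamma> i)) ` arc_params \<Omega> q P Q (\<gamma> i). essential_arc \<Omega> q P Q (\<gamma> i) J})"
  by (auto simp: essential_arcs_def)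

lemma card_essential_arc_intervals_le_hausdorff1:
  fixes g :: "real \<Rightarrow> pt"
  assumes g: "continuous_on {0..1} g" "inj_on g {0..<1}" "g 0 = g 1" and "\<delta> > 0"
    and far: "\<And>J. essential_arc \<Omega> q P Q g J \<Longrightarrow> \<exists>a\<in>closure J. \<exists>b\<in>closure J. \<delta> \<le> dist (g a) (g b)"
    and "finite F"
    and F: "F \<subseteq> {J \<in> arc_interval (arc_params \<Omega> q P Q g) ` arc_params \<Omega> q P Q g. essential_arc \<Omega> q P Q g J}"
  shows "ennreal (real (card F) * (\<delta>/4)) \<le> hausdorff1 (g ` {0..1})"
proof (rule card_far_arc_intervals_le_hausdorff1[OF g _ _ \<open>\<delta> > 0\<close> \<open>finite F\<close>])
  show "arc_params \<Omega> q P Q g \<subseteq> {0..1}"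
    "0 \<in> arc_params \<Omega> q P Q g \<longleftrightarrow> 1 \<in> arc_params \<Omega> q P Q g"
    using g(3) by (auto simp: arc_params_def)
qed (use F far in blast)+

theorem lemma1p12:
  fixes \<Omega> :: "(real^2) set" and a :: "nat \<Rightarrow> real^2" and p q :: nat
    and P Q :: "nat \<Rightarrow> real^2"
  assumes "bounded \<Omega>" and "simply_connected \<Omega>" and "C2_domain \<Omega>"
    and "inj_on a {..<p}" and "a ` {..<p} \<subseteq> \<Omega>"
    and "minimal_connection \<Omega> a p q P Q"
  shows "\<forall>A I C \<gamma>. A \<subseteq> \<Omega> \<and> finite_perimeter A \<and> jordan_decomposition \<Omega> A I C \<gamma> \<longrightarrow>
           finite (essential_arcs \<Omega> q P Q I \<gamma>)"
proof (intro allI impI)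
  fix A I C \<gamma>
  assume "A \<subseteq> \<Omega> \<and> finite_perimeter A \<and> jordan_decomposition \<Omega> A I C \<gamma>"
  then have curves: "\<And>i. i \<in> I \<Longrightarrow> C i = \<gamma> i ` {0..1} \<and> continuous_on {0..1} (\<gamma> i) \<and>
        inj_on (\<gamma> i) {0..<1} \<and> \<gamma> i 0 = \<gamma> i 1"
    and length: "(\<Sum>i. if i \<in> I then hausdorff1 (C i) else 0) < \<infinity>"
    by (auto simp: jordan_decomposition_def finite_perimeter_def intro: lipschitz_on_continuous_on)
  have "open \<Omega>" "C2_boundary \<Omega>"
    using assms(3) by (simp_all add: C2_domain_def)
  then obtain \<delta> where "\<delta> > 0" and far:
      "\<And>g J. essential_arc \<Omega> q P Q g J \<Longrightarrow> \<exists>a\<in>closure J. \<exists>b\<in>closure J. \<delta> \<le> dist (g a) (g b)"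
    using essential_arc_endpoints_far minimal_connection_segments_disjoint[OF assms(6) _ assms(5)] by metis
  have "ennreal (real (card F) * (\<delta>/4)) \<le> (if i \<in> I then hausdorff1 (C i) else 0)"
    if "i \<in> I" "finite F" "F \<subseteq> {J \<in> arc_interval (arc_params \<Omega> q P Q (\<gamma> i)) ` arc_params \<Omega> q P Q (\<gamma> i).
        essential_arc \<Omega> q P Q (\<gamma> i) J}" for i F
    using card_essential_arc_intervals_le_hausdorff1[where g = "\<gamma> i", OF _ _ _ \<open>\<delta> > 0\<close> far]
      curves[OF \<open>i \<in> I\<close>] that by simp
  then show "finite (essential_arcs \<Omega> q P Q I \<gamma>)"
    unfolding essential_arcs_eq_Sigma using \<open>\<delta> > 0\<close>
    by (intro finite_Sigma_if_card_bounded_by_summable[where c = "\<delta>/4", OF _ length]) auto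
qed

end
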